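(* Let $S$ be an LAD-AG-groupoid. Then $S$ is self-dual, i.e. $a(bc)=c(ba)$ for all $a,b,c\in S$.
   Context: A groupoid is a set $S$ with a binary operation written as juxtaposition; $ab\cdot c$ means $(ab)c$ and $a\cdot bc$ means $a(bc)$. An AG-groupoid is a groupoid satisfying the left invertive law $(ab)c=(cb)a$ for all $a,b,c\in S$. An LAD-AG-groupoid (left abelian distributive AG-groupoid) is an AG-groupoid satisfying $a(bc)=(ab)(ca)$ for all $a,b,c\in S$. *)

theory Defs
  imports Main
begin

definition groupoid :: "'a set \<Rightarrow> ('a \<Rightarrow> 'a \<Rightarrow> 'a) \<Rightarrow> bool" where
  "groupoid S m \<longleftrightarrow> (\<forall>a\<in>S. \<forall>b\<in>S. m a b \<in> S)"

definition AG_groupoid :: "'a set \<Rightarrow> ('a \<Rightarrow> 'a \<Rightarrow> 'a) \<Rightarrow> bool" where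
  "AG_groupoid S m \<longleftrightarrow> groupoid S m \<and>
     (\<forall>a\<in>S. \<forall>b\<in>S. \<forall>c\<in>S. m (m a b) c = m (m c b) a)"

definition LAD_AG_groupoid :: "'a set \<Rightarrow> ('a \<Rightarrow> 'a \<Rightarrow> 'a) \<Rightarrow> bool" where
  "LAD_AG_groupoid S m \<longleftrightarrow> AG_groupoid S m \<and>
     (\<forall>a\<in>S. \<forall>b\<in>S. \<forall>c\<in>S. m a (m b c) = m (m a b) (m c a))"

definition self_dual :: "'a set \<Rightarrow> ('a \<Rightarrow> 'a \<Rightarrow> 'a) \<Rightarrow> bool" where
  "self_dual S m \<longleftrightarrow> (\<forall>a\<in>S. \<forall>b\<in>S. \<forall>c\<in>S. m a (m b c) = m c (m b a))"

end

theory Submission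
  imports Defs
begin

text \<open>
  From the left invertive
  law alone we get the medial law (ab)(cd) = (ac)(bd).  Combined with the LAD
  identity a(bc) = (ab)(ca) this yields, in turn:
    a(bc) = a(cb)              (right commutativity),
    a(bc) = (ab)(ac)           (left multiplications are endomorphisms),
    (aa)(bc) = a(bc)  and  ((ab)c)c = c(ab),
    a(b(cb)) = a(bc),  a(ba) = a(bb),  (ab)(cc) = a(cb),
  and finally left permutability a(cb) = c(ab).  Self-duality is left
  permutability conjugated by right commutativity:
    a(bc) = a(cb) = c(ab) = c(ba).
\<close>

locale AG =
  fixes S :: "'a set" and m :: "'a \<Rightarrow> 'a \<Rightarrow> 'a"  (infixl \<open>\<cdot>\<close> 70)
  assumes AG: "AG_groupoid S (\<cdot>)"
begin

lemma closed [simp]: "a \<in> S \<Longrightarrow> b \<in> S \<Longrightarrow> a \<cdot> b \<in> S"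
  using AG unfolding AG_groupoid_def groupoid_def by blast

lemma left_invertive:
  "a \<in> S \<Longrightarrow> b \<in> S \<Longrightarrow> c \<in> S \<Longrightarrow> (a \<cdot> b) \<cdot> c = (c \<cdot> b) \<cdot> a"
  using AG unfolding AG_groupoid_def by blast

lemma medial:
  assumes [simp]: "a \<in> S" "b \<in> S" "c \<in> S" "d \<in> S"
  shows "(a \<cdot> b) \<cdot> (c \<cdot> d) = (a \<cdot> c) \<cdot> (b \<cdot> d)"
proof -
  have "(a \<cdot> b) \<cdot> (c \<cdot> d) = ((c \<cdot> d) \<cdot> b) \<cdot> a" by (rule left_invertive) simp_all
  also have "\<dots> = ((b \<cdot> d) \<cdot> c) \<cdot> a" by (simp add: left_invertive[of c d b])
  also have "\<dots> = (a \<cdot> c) \<cdot> (b \<cdot> d)" by (rule left_invertive) simp_all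
  finally show ?thesis .
qed

end

locale LAD_AG = AG +
  assumes LAD: "a \<in> S \<Longrightarrow> b \<in> S \<Longrightarrow> c \<in> S \<Longrightarrow> a \<cdot> (b \<cdot> c) = (a \<cdot> b) \<cdot> (c \<cdot> a)"
begin

lemma right_commute:
  assumes [simp]: "a \<in> S" "b \<in> S" "c \<in> S"
  shows "a \<cdot> (b \<cdot> c) = a \<cdot> (c \<cdot> b)"
proof -
  have "a \<cdot> (b \<cdot> c) = (a \<cdot> b) \<cdot> (c \<cdot> a)" by (rule LAD) simp_all
  also have "\<dots> = (a \<cdot> c) \<cdot> (b \<cdot> a)" by (rule medial) simp_all
  also have "\<dots> = a \<cdot> (c \<cdot> b)" by (rule LAD[symmetric]) simp_all
  finally show ?thesis .
qed

lemma left_distrib: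
  assumes [simp]: "a \<in> S" "b \<in> S" "c \<in> S"
  shows "a \<cdot> (b \<cdot> c) = (a \<cdot> b) \<cdot> (a \<cdot> c)"
proof -
  have "a \<cdot> (b \<cdot> c) = (a \<cdot> b) \<cdot> (c \<cdot> a)" by (rule LAD) simp_all
  also have "\<dots> = (a \<cdot> b) \<cdot> (a \<cdot> c)" by (rule right_commute) simp_all
  finally show ?thesis .
qed

lemma square_left_mult:
  assumes [simp]: "a \<in> S" "b \<in> S" "c \<in> S"
  shows "(a \<cdot> a) \<cdot> (b \<cdot> c) = a \<cdot> (b \<cdot> c)"
proof -
  have "(a \<cdot> a) \<cdot> (b \<cdot> c) = (a \<cdot> b) \<cdot> (a \<cdot> c)" by (rule medial) simp_all
  also have "\<dots> = a \<cdot> (b \<cdot> c)" by (rule left_distrib[symmetric]) simp_all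
  finally show ?thesis .
qed

lemma right_mult_twice:
  assumes [simp]: "a \<in> S" "b \<in> S" "c \<in> S"
  shows "((a \<cdot> b) \<cdot> c) \<cdot> c = c \<cdot> (a \<cdot> b)"
proof -
  have "((a \<cdot> b) \<cdot> c) \<cdot> c = (c \<cdot> c) \<cdot> (a \<cdot> b)" by (rule left_invertive) simp_all
  also have "\<dots> = c \<cdot> (a \<cdot> b)" by (rule square_left_mult) simp_all
  finally show ?thesis .
qed

text \<open>An absorption law: the extra factor b in a(b(cb)) can be dropped.  Expanding
  by left distributivity produces a product of the shape ((xy)z)z, which
  collapses by the previous lemma.\<close>

lemma absorb:
  assumes [simp]: "a \<in> S" "b \<in> S" "c \<in> S"
  shows "a \<cdot> (b \<cdot> (c \<cdot> b)) = a \<cdot> (b \<cdot> c)"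
proof -
  have "a \<cdot> (b \<cdot> (c \<cdot> b)) = a \<cdot> ((c \<cdot> b) \<cdot> b)" by (rule right_commute) simp_all
  also have "\<dots> = (a \<cdot> (c \<cdot> b)) \<cdot> (a \<cdot> b)" by (rule left_distrib) simp_all
  also have "\<dots> = ((a \<cdot> c) \<cdot> (a \<cdot> b)) \<cdot> (a \<cdot> b)" by (simp add: left_distrib[of a c b])
  also have "\<dots> = (a \<cdot> b) \<cdot> (a \<cdot> c)" by (rule right_mult_twice) simp_all
  also have "\<dots> = a \<cdot> (b \<cdot> c)" by (rule left_distrib[symmetric]) simp_all
  finally show ?thesis .
qed

lemma inner_square:
  assumes [simp]: "a \<in> S" "b \<in> S"
  shows "a \<cdot> (b \<cdot> a) = a \<cdot> (b \<cdot> b)"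
proof -
  have "a \<cdot> (b \<cdot> a) = a \<cdot> (b \<cdot> (a \<cdot> b))" by (rule absorb[symmetric]) simp_all
  also have "\<dots> = (a \<cdot> b) \<cdot> (a \<cdot> (a \<cdot> b))" by (rule left_distrib) simp_all
  also have "\<dots> = (a \<cdot> b) \<cdot> (a \<cdot> (b \<cdot> a))" by (simp add: right_commute[of a a b])
  also have "\<dots> = (a \<cdot> b) \<cdot> (a \<cdot> b)" by (rule absorb) simp_all
  also have "\<dots> = a \<cdot> (b \<cdot> b)" by (rule left_distrib[symmetric]) simp_all
  finally show ?thesis .
qed

lemma mult_square_right:
  assumes [simp]: "a \<in> S" "b \<in> S" "c \<in> S"
  shows "(a \<cdot> b) \<cdot> (c \<cdot> c) = a \<cdot> (c \<cdot> b)"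
proof -
  have "(a \<cdot> b) \<cdot> (c \<cdot> c) = (a \<cdot> b) \<cdot> (c \<cdot> (a \<cdot> b))" by (rule inner_square[symmetric]) simp_all
  also have "\<dots> = (a \<cdot> c) \<cdot> (b \<cdot> (a \<cdot> b))" by (rule medial) simp_all
  also have "\<dots> = (a \<cdot> c) \<cdot> (b \<cdot> a)" by (rule absorb) simp_all
  also have "\<dots> = a \<cdot> (c \<cdot> b)" by (rule LAD[symmetric]) simp_all
  finally show ?thesis .
qed

text \<open>Left permutability.  Write a(cb) as (aa)(cb), blow it up to the shape
  ((cb)(aa))(aa), and collapse it with the previous lemma and absorption.\<close>

lemma left_permute:
  assumes [simp]: "a \<in> S" "b \<in> S" "c \<in> S"
  shows "a \<cdot> (c \<cdot> b) = c \<cdot> (a \<cdot> b)"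
proof -
  have "a \<cdot> (c \<cdot> b) = (a \<cdot> a) \<cdot> (c \<cdot> b)" by (rule square_left_mult[symmetric]) simp_all
  also have "\<dots> = ((c \<cdot> b) \<cdot> (a \<cdot> a)) \<cdot> (a \<cdot> a)" by (rule right_mult_twice[symmetric]) simp_all
  also have "\<dots> = (c \<cdot> b) \<cdot> (a \<cdot> (a \<cdot> a))" by (rule mult_square_right) simp_all
  also have "\<dots> = (c \<cdot> b) \<cdot> (a \<cdot> a)" by (rule absorb) simp_all
  also have "\<dots> = c \<cdot> (a \<cdot> b)" by (rule mult_square_right) simp_all
  finally show ?thesis .
qed

lemma self_dual: "self_dual S (\<cdot>)"
  unfolding self_dual_def
proof (intro ballI)
  fix a b c assume [simp]: "a \<in> S" "b \<in> S" "c \<in> S"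
  have "a \<cdot> (b \<cdot> c) = a \<cdot> (c \<cdot> b)" by (rule right_commute) simp_all
  also have "\<dots> = c \<cdot> (a \<cdot> b)" by (rule left_permute) simp_all
  also have "\<dots> = c \<cdot> (b \<cdot> a)" by (rule right_commute) simp_all
  finally show "a \<cdot> (b \<cdot> c) = c \<cdot> (b \<cdot> a)" .
qed

end

lemma LAD_AG_groupoid_imp_LAD_AG:
  assumes "LAD_AG_groupoid S m"
  shows "LAD_AG S m"
  using assms unfolding LAD_AG_groupoid_def LAD_AG_def LAD_AG_axioms_def AG_def by blast

theorem mainTheorem2:
  fixes S :: "'a set" and m :: "'a \<Rightarrow> 'a \<Rightarrow> 'a"
  assumes "LAD_AG_groupoid S m"
  shows "self_dual S m"
  using LAD_AG.self_dual[OF LAD_AG_groupoid_imp_LAD_AG[OF assms]] .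

end
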